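(* There exists a connected highly arc transitive digraph $D$ with an epimorphism $\varphi:D\to Z$ onto the integer-line digraph such that all fibers $\varphi^{-1}(i)$, $i\in\mathbb{Z}$, are finite, and whose associated digraph $\Delta(D)$ is not complete bipartite.
   Context: The integer-line digraph is $Z=(\mathbb{Z},\{(i,i+1)\mid i\in\mathbb{Z}\})$; an epimorphism is a surjective digraph homomorphism. An $n$-arc is a sequence of directed edges $e_0,\dots,e_{n-1}$ with the terminal vertex of $e_i$ equal to the initial vertex of $e_{i+1}$; a digraph is highly arc transitive if for every $n\in\mathbb{N}$ its automorphism group acts transitively on its (nonempty set of) $n$-arcs. An alternating walk is a sequence of edges $e_0,\dots,e_{n-1}$ in which consecutive edges alternately share their initial vertex and their terminal vertex. Two edges are reachable from each other if some alternating walk contains both; this is an equivalence relation. For an edge $e$, $\Delta(e)$ is the subgraph spanned by the reachability class of $e$; in a highly arc transitive digraph all $\Delta(e)$ are isomorphic and their common isomorphism type is the associated digraph $\Delta(D)$. *)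

theory Defs
  imports Main
begin

definition digraph :: "'a set \<Rightarrow> ('a \<times> 'a) set \<Rightarrow> bool" where
  "digraph V E \<longleftrightarrow> E \<subseteq> V \<times> V"

definition dconnected :: "'a set \<Rightarrow> ('a \<times> 'a) set \<Rightarrow> bool" where
  "dconnected V E \<longleftrightarrow> V \<noteq> {} \<and> (\<forall>u\<in>V. \<forall>v\<in>V. (u, v) \<in> (E \<union> E\<inverse>)\<^sup>*)"

definition epi_Z :: "'a set \<Rightarrow> ('a \<times> 'a) set \<Rightarrow> ('a \<Rightarrow> int) \<Rightarrow> bool" where
  "epi_Z V E \<phi> \<longleftrightarrow> (\<forall>(u, v)\<in>E. \<phi> v = \<phi> u + 1) \<and> \<phi> ` V = UNIV"

definition automorphism :: "'a set \<Rightarrow> ('a \<times> 'a) set \<Rightarrow> ('a \<Rightarrow> 'a) \<Rightarrow> bool" where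
  "automorphism V E f \<longleftrightarrow> bij_betw f V V \<and>
     (\<forall>u\<in>V. \<forall>v\<in>V. (u, v) \<in> E \<longleftrightarrow> (f u, f v) \<in> E)"

definition is_arc :: "('a \<times> 'a) set \<Rightarrow> nat \<Rightarrow> ('a \<times> 'a) list \<Rightarrow> bool" where
  "is_arc E n es \<longleftrightarrow> length es = n \<and> set es \<subseteq> E \<and>
     (\<forall>i. Suc i < n \<longrightarrow> snd (es ! i) = fst (es ! Suc i))"

definition map_edges :: "('a \<Rightarrow> 'a) \<Rightarrow> ('a \<times> 'a) list \<Rightarrow> ('a \<times> 'a) list" where
  "map_edges f es = map (\<lambda>(u, v). (f u, f v)) es"

definition highly_arc_transitive :: "'a set \<Rightarrow> ('a \<times> 'a) set \<Rightarrow> bool" where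
  "highly_arc_transitive V E \<longleftrightarrow>
     (\<forall>n. (\<exists>es. is_arc E n es) \<and>
          (\<forall>es1 es2. is_arc E n es1 \<and> is_arc E n es2 \<longrightarrow>
             (\<exists>f. automorphism V E f \<and> map_edges f es1 = es2)))"

definition share_init :: "'a \<times> 'a \<Rightarrow> 'a \<times> 'a \<Rightarrow> bool" where
  "share_init e f \<longleftrightarrow> fst e = fst f"

definition share_term :: "'a \<times> 'a \<Rightarrow> 'a \<times> 'a \<Rightarrow> bool" where
  "share_term e f \<longleftrightarrow> snd e = snd f"

definition alternating_walk :: "('a \<times> 'a) set \<Rightarrow> ('a \<times> 'a) list \<Rightarrow> bool" where
  "alternating_walk E es \<longleftrightarrow> es \<noteq> [] \<and> set es \<subseteq> E \<and>
     ((\<forall>i. Suc i < length es \<longrightarrow>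
         (if even i then share_init (es ! i) (es ! Suc i) else share_term (es ! i) (es ! Suc i))) \<or>
      (\<forall>i. Suc i < length es \<longrightarrow>
         (if even i then share_term (es ! i) (es ! Suc i) else share_init (es ! i) (es ! Suc i))))"

definition reachable :: "('a \<times> 'a) set \<Rightarrow> 'a \<times> 'a \<Rightarrow> 'a \<times> 'a \<Rightarrow> bool" where
  "reachable E e f \<longleftrightarrow> (\<exists>es. alternating_walk E es \<and> e \<in> set es \<and> f \<in> set es)"

definition Delta_edges :: "('a \<times> 'a) set \<Rightarrow> 'a \<times> 'a \<Rightarrow> ('a \<times> 'a) set" where
  "Delta_edges E e = {f. reachable E e f}"

definition Delta_verts :: "('a \<times> 'a) set \<Rightarrow> 'a \<times> 'a \<Rightarrow> 'a set" where
  "Delta_verts E e = fst ` Delta_edges E e \<union> snd ` Delta_edges E e"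

definition complete_bipartite :: "'a set \<Rightarrow> ('a \<times> 'a) set \<Rightarrow> bool" where
  "complete_bipartite V E \<longleftrightarrow>
     (\<exists>A B. A \<inter> B = {} \<and> A \<union> B = V \<and> A \<noteq> {} \<and> B \<noteq> {} \<and> E = A \<times> B)"

end

theory Submission
  imports Defs "HOL-Library.Nat_Bijection" "HOL-Combinatorics.Permutations"
begin

text \<open>Take as vertices the triples \<open>(i, a, b)\<close> of a level \<open>i \<in> \<int>\<close> and two labels
  \<open>a, b \<in> {0, 1, 2}\<close>, with an edge \<open>(i, a, b) \<rightarrow> (i + 1, a', b')\<close> whenever \<open>b \<noteq> a'\<close>. Whether
  an edge joins two consecutive levels depends only on the two labels meeting at the gap between
  them, so shifting the levels and independently permuting the labels at every gap is an
  automorphism. An \<open>n\<close>-arc meets the \<open>n\<close> gaps it crosses in pairs of distinct labels, hence any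
  two \<open>n\<close>-arcs are related by such an automorphism. The level map is the epimorphism onto \<open>Z\<close>,
  with fibres of size 9. Finally, an edge \<open>(u, v)\<close> reaches by an alternating walk an edge
  \<open>(x, y)\<close> whose head carries the in-label equal to the out-label of \<open>u\<close>; then \<open>(u, y)\<close> is
  a non-edge between the two sides of \<open>\<Delta>\<close>, which is therefore not complete bipartite.\<close>

lemma permutes_map_two_points:
  assumes "a \<in> S" "b \<in> S" "c \<in> S" "d \<in> S" "a = b \<longleftrightarrow> c = d"
  shows "\<exists>g. g permutes S \<and> g a = c \<and> g b = d"
proof -
  define b' where "b' = transpose a c b"
  define g where "g = transpose b' d \<circ> transpose a c"
  have "b' \<in> S" using assms by (auto simp: b'_def transpose_def)
  then have "g permutes S"
    unfolding g_def using assms by (intro permutes_compose permutes_swap_id)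
  moreover have "g a = c"
    using assms by (cases "a = b") (auto simp: g_def b'_def transpose_def)
  moreover have "g b = d" by (simp add: g_def b'_def)
  ultimately show ?thesis by blast
qed

lemma exists_third_label: "\<exists>c::nat. c < 3 \<and> c \<noteq> p \<and> c \<noteq> q"
  by (rule exI[of _ "if p \<noteq> 0 \<and> q \<noteq> 0 then 0 else if p \<noteq> 1 \<and> q \<noteq> 1 then 1 else 2"]) auto

definition arc_vertex :: "('a \<times> 'a) list \<Rightarrow> nat \<Rightarrow> 'a" where
  "arc_vertex es t = (if t < length es then fst (es ! t) else snd (last es))"

lemma is_arc_nth:
  assumes "is_arc E n es" "t < n"
  shows "es ! t = (arc_vertex es t, arc_vertex es (Suc t))"
proof -
  have "snd (es ! t) = arc_vertex es (Suc t)"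
  proof (cases "Suc t < n")
    case True
    then show ?thesis using assms(1) by (auto simp: is_arc_def arc_vertex_def)
  next
    case False
    then have "t = length es - 1" "es \<noteq> []" using assms by (auto simp: is_arc_def)
    then show ?thesis by (simp add: arc_vertex_def last_conv_nth)
  qed
  then show ?thesis using assms by (simp add: is_arc_def arc_vertex_def prod_eq_iff)
qed

lemma is_arc_conv_map:
  assumes "is_arc E n es"
  shows "es = map (\<lambda>t. (arc_vertex es t, arc_vertex es (Suc t))) [0..<n]"
proof (rule nth_equalityI)
  show length: "length es = length (map (\<lambda>t. (arc_vertex es t, arc_vertex es (Suc t))) [0..<n])"
    using assms by (simp add: is_arc_def)
  fix t
  assume "t < length es"
  then have "t < n" using length by simp
  then show "es ! t = map (\<lambda>t. (arc_vertex es t, arc_vertex es (Suc t))) [0..<n] ! t"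
    using is_arc_nth[OF assms] by simp
qed

lemma is_arc_vertex_edge:
  "is_arc E n es \<Longrightarrow> t < n \<Longrightarrow> (arc_vertex es t, arc_vertex es (Suc t)) \<in> E"
  by (metis is_arc_def is_arc_nth nth_mem subsetD)

lemma is_arc_vertex_level:
  assumes "is_arc E n es" "\<forall>(u, v)\<in>E. \<phi> v = \<phi> u + 1" "t \<le> n"
  shows "\<phi> (arc_vertex es t) = \<phi> (arc_vertex es 0) + int t"
  using assms(3)
proof (induction t)
  case (Suc t)
  then show ?case using is_arc_vertex_edge[OF assms(1), of t] assms(2) by fastforce
qed simp

text \<open>The vertex \<open>(i, a, b)\<close> on level \<open>i\<close> with in-label \<open>a < 3\<close> and out-label \<open>b < 3\<close> is
  encoded by the natural number whose base-3 digits are \<open>b, a\<close>, followed by \<open>int_encode i\<close>.\<close>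

definition vertex :: "int \<Rightarrow> nat \<Rightarrow> nat \<Rightarrow> nat" where
  "vertex i a b = b + 3 * (a + 3 * int_encode i)"

definition level :: "nat \<Rightarrow> int" where
  "level v = int_decode (v div 3 div 3)"

definition inlabel :: "nat \<Rightarrow> nat" where
  "inlabel v = v div 3 mod 3"

definition outlabel :: "nat \<Rightarrow> nat" where
  "outlabel v = v mod 3"

lemma vertex_components [simp]:
  assumes "a < 3" "b < 3"
  shows "level (vertex i a b) = i" "inlabel (vertex i a b) = a" "outlabel (vertex i a b) = b"
proof -
  have digit: "(c + 3 * m) div 3 = m" "(c + 3 * m) mod 3 = c" if "c < 3" for c m :: nat
    using that by simp_all
  show "level (vertex i a b) = i" "inlabel (vertex i a b) = a" "outlabel (vertex i a b) = b"
    using assms by (simp_all only: vertex_def level_def inlabel_def outlabel_def digit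
        int_encode_inverse)
qed

lemma inlabel_less [simp]: "inlabel v < 3"
  and outlabel_less [simp]: "outlabel v < 3"
  by (simp_all add: inlabel_def outlabel_def)

lemma vertex_level_labels [simp]: "vertex (level v) (inlabel v) (outlabel v) = v"
  by (simp add: vertex_def level_def inlabel_def outlabel_def)

lemma vertex_eq_iff:
  "u = v \<longleftrightarrow> level u = level v \<and> inlabel u = inlabel v \<and> outlabel u = outlabel v"
  by (metis vertex_level_labels)

definition label_edges :: "(nat \<times> nat) set" where
  "label_edges = {(u, v). level v = level u + 1 \<and> outlabel u \<noteq> inlabel v}"

lemma mem_label_edges:
  "(u, v) \<in> label_edges \<longleftrightarrow> level v = level u + 1 \<and> outlabel u \<noteq> inlabel v"
  by (simp add: label_edges_def)

lemma label_edges_level_step: "\<forall>(u, v)\<in>label_edges. level v = level u + 1"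
  by (auto simp: mem_label_edges)

text \<open>\<open>relabel d G\<close> shifts all levels by \<open>d\<close> and applies \<open>G j\<close> to the labels at the gap between
  levels \<open>j - 1\<close> and \<open>j\<close>, i.e.\ to the out-labels on level \<open>j - 1\<close> and the in-labels on level \<open>j\<close>.\<close>

definition relabel :: "int \<Rightarrow> (int \<Rightarrow> nat \<Rightarrow> nat) \<Rightarrow> nat \<Rightarrow> nat" where
  "relabel d G v = vertex (level v + d) (G (level v) (inlabel v)) (G (level v + 1) (outlabel v))"

context
  fixes G :: "int \<Rightarrow> nat \<Rightarrow> nat"
  assumes G_permutes: "\<And>j. G j permutes {..<3}"
begin

lemma permuted_label_less: "x < 3 \<Longrightarrow> G j x < 3"
  using permutes_in_image[OF G_permutes] by simp

lemma permuted_label_eq_iff: "G j x = G j y \<longleftrightarrow> x = y"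
  using permutes_inj[OF G_permutes] by (simp add: inj_eq)

lemma relabel_components [simp]:
  "level (relabel d G v) = level v + d"
  "inlabel (relabel d G v) = G (level v) (inlabel v)"
  "outlabel (relabel d G v) = G (level v + 1) (outlabel v)"
  by (simp_all add: relabel_def permuted_label_less)

lemma surj_relabel: "surj (relabel d G)"
proof -
  have "y \<in> range (relabel d G)" for y
  proof -
    define i where "i = level y - d"
    define a where "a = inv (G i) (inlabel y)"
    define b where "b = inv (G (i + 1)) (outlabel y)"
    have "a < 3" "b < 3"
      unfolding a_def b_def using permutes_in_image[OF permutes_inv[OF G_permutes]] by simp_all
    then have "relabel d G (vertex i a b) = y"
      by (simp add: vertex_eq_iff[of _ y] i_def a_def b_def permutes_inverses[OF G_permutes])
    then show ?thesis by (metis rangeI)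
  qed
  then show ?thesis by blast
qed

lemma automorphism_relabel: "automorphism UNIV label_edges (relabel d G)"
proof -
  have "inj (relabel d G)"
  proof (rule injI)
    fix u v
    assume eq: "relabel d G u = relabel d G v"
    have "level u = level v"
      using arg_cong[OF eq, of level] by simp
    moreover have "inlabel u = inlabel v" "outlabel u = outlabel v"
      using arg_cong[OF eq, of inlabel] arg_cong[OF eq, of outlabel] calculation
      by (simp_all add: permuted_label_eq_iff)
    ultimately show "u = v"
      using vertex_eq_iff by blast
  qed
  moreover have "(u, v) \<in> label_edges \<longleftrightarrow> (relabel d G u, relabel d G v) \<in> label_edges" for u v
    by (cases "level v = level u + 1") (simp_all add: mem_label_edges permuted_label_eq_iff)
  ultimately show ?thesis
    using surj_relabel by (simp add: automorphism_def bij_betw_def)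
qed

end

text \<open>The in- and out-label met by an arc with vertices \<open>p 0, \<dots>, p n\<close> at the gap between
  \<open>p (s - 1)\<close> and \<open>p s\<close>; at the gaps it does not cross they are padded to coincide, so that they
  impose no condition there.\<close>

definition gap_inlabel :: "(nat \<Rightarrow> nat) \<Rightarrow> nat \<Rightarrow> nat \<Rightarrow> nat" where
  "gap_inlabel p n s = (if s \<le> n then inlabel (p s) else outlabel (p (s - 1)))"

definition gap_outlabel :: "(nat \<Rightarrow> nat) \<Rightarrow> nat \<Rightarrow> nat \<Rightarrow> nat" where
  "gap_outlabel p n s = (if 0 < s then outlabel (p (s - 1)) else inlabel (p s))"

lemma gap_labels_eq_iff:
  assumes "is_arc label_edges n es"
  shows "gap_inlabel (arc_vertex es) n s = gap_outlabel (arc_vertex es) n s \<longleftrightarrow> s = 0 \<or> n < s"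
proof (cases "0 < s \<and> s \<le> n")
  case True
  then have "s - 1 < n" "Suc (s - 1) = s" by auto
  then have "(arc_vertex es (s - 1), arc_vertex es s) \<in> label_edges"
    using is_arc_vertex_edge[OF assms] by metis
  then show ?thesis using True by (auto simp: gap_inlabel_def gap_outlabel_def mem_label_edges)
qed (auto simp: gap_inlabel_def gap_outlabel_def)

lemma arc_transitive_label_edges:
  assumes arc1: "is_arc label_edges n es1" and arc2: "is_arc label_edges n es2"
  shows "\<exists>f. automorphism UNIV label_edges f \<and> map_edges f es1 = es2"
proof -
  define p where "p = arc_vertex es1"
  define q where "q = arc_vertex es2"
  have "\<forall>s. \<exists>g. g permutes {..<3} \<and> g (gap_inlabel p n s) = gap_inlabel q n s \<and>
                g (gap_outlabel p n s) = gap_outlabel q n s"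
    using gap_labels_eq_iff[OF arc1] gap_labels_eq_iff[OF arc2]
    by (intro allI permutes_map_two_points)
      (simp_all add: p_def q_def gap_inlabel_def gap_outlabel_def)
  then obtain g where g: "\<forall>s. g s permutes {..<3} \<and> g s (gap_inlabel p n s) = gap_inlabel q n s \<and>
                g s (gap_outlabel p n s) = gap_outlabel q n s"
    by (rule choice[THEN exE])
  define G where "G j = g (nat (j - level (p 0)))" for j
  define f where "f = relabel (level (q 0) - level (p 0)) G"
  have G_permutes: "G j permutes {..<3}" for j
    using g by (simp add: G_def)
  have levels: "level (p t) = level (p 0) + int t" "level (q t) = level (q 0) + int t"
    if "t \<le> n" for t
    using is_arc_vertex_level[OF arc1 label_edges_level_step that]
      is_arc_vertex_level[OF arc2 label_edges_level_step that]
    by (simp_all add: p_def q_def)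
  have f_arc: "f (p t) = q t" if "t \<le> n" for t
  proof -
    have "G (level (p t)) (inlabel (p t)) = inlabel (q t)"
      using g[rule_format, of t] that by (simp add: levels[OF that] G_def gap_inlabel_def)
    moreover have "G (level (p t) + 1) (outlabel (p t)) = outlabel (q t)"
      using g[rule_format, of "Suc t"] that nat_int_add[of t 1]
      by (simp add: levels[OF that] G_def gap_outlabel_def)
    ultimately show ?thesis
      using that by (simp add: f_def vertex_eq_iff[of _ "q t"] levels[OF that] G_permutes)
  qed
  have "map_edges f es1 = map_edges f (map (\<lambda>t. (p t, p (Suc t))) [0..<n])"
    unfolding p_def by (rule arg_cong[OF is_arc_conv_map[OF arc1]])
  also have "\<dots> = map (\<lambda>t. (q t, q (Suc t))) [0..<n]"
    using f_arc by (simp add: map_edges_def)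
  also have "\<dots> = es2"
    unfolding q_def by (rule is_arc_conv_map[OF arc2, symmetric])
  finally have "map_edges f es1 = es2" .
  moreover have "automorphism UNIV label_edges f"
    unfolding f_def using G_permutes by (rule automorphism_relabel)
  ultimately show ?thesis by blast
qed

lemma highly_arc_transitive_label_edges: "highly_arc_transitive UNIV label_edges"
  unfolding highly_arc_transitive_def
proof (intro allI conjI)
  fix n
  show "\<exists>es. is_arc label_edges n es"
    by (rule exI[of _ "map (\<lambda>t. (vertex (int t) 1 0, vertex (int (Suc t)) 1 0)) [0..<n]"])
      (auto simp: is_arc_def mem_label_edges)
qed (use arc_transitive_label_edges in blast)

abbreviation label_connected :: "nat \<Rightarrow> nat \<Rightarrow> bool" where
  "label_connected u v \<equiv> (u, v) \<in> (label_edges \<union> label_edges\<inverse>)\<^sup>*"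

lemma label_connected_sym: "label_connected u v \<Longrightarrow> label_connected v u"
  by (metis converse_Un converse_converse rtrancl_converseI sup_commute)

text \<open>The vertices \<open>vertex i 1 0\<close> form a directed line through all levels, and every vertex is
  joined to the one on its level by a path of length two.\<close>

lemma label_connected_base: "label_connected v (vertex (level v) 1 0)"
proof -
  obtain a where a: "a < 3" "a \<noteq> outlabel v" "a \<noteq> 0"
    using exists_third_label by blast
  define w where "w = vertex (level v + 1) a 0"
  have "(v, w) \<in> label_edges" "(vertex (level v) 1 0, w) \<in> label_edges"
    using a by (simp_all add: w_def mem_label_edges)
  then show ?thesis by (meson converse_iff r_into_rtrancl rtrancl_trans UnI1 UnI2)
qed

lemma label_connected_bases: "label_connected (vertex i 1 0) (vertex (i + int k) 1 0)"
proof (induction k)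
  case (Suc k)
  have "(vertex (i + int k) 1 0, vertex (i + int (Suc k)) 1 0) \<in> label_edges"
    by (simp add: mem_label_edges)
  then show ?case using Suc.IH by (meson UnI1 rtrancl.rtrancl_into_rtrancl)
qed simp

lemma dconnected_label_edges: "dconnected UNIV label_edges"
  unfolding dconnected_def
proof (intro conjI ballI)
  fix u v :: nat
  have bases: "label_connected (vertex i 1 0) (vertex j 1 0)" for i j
  proof (cases "i \<le> j")
    case True
    then show ?thesis using label_connected_bases[of i "nat (j - i)"] by simp
  next
    case False
    then show ?thesis using label_connected_bases[of j "nat (i - j)"] label_connected_sym by simp
  qed
  show "label_connected u v"
    using label_connected_base[of u] bases[of "level u" "level v"]
      label_connected_sym[OF label_connected_base[of v]]
    by (meson rtrancl_trans)
qed simp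

lemma epi_Z_level: "epi_Z UNIV label_edges level"
  unfolding epi_Z_def
proof
  show "range level = UNIV"
    by (rule surjI[of _ "\<lambda>i. vertex i 0 0"]) simp
qed (rule label_edges_level_step)

lemma finite_level_fibre: "finite {v \<in> UNIV. level v = i}"
proof (rule finite_subset)
  show "{v \<in> UNIV. level v = i} \<subseteq> (\<lambda>(a, b). vertex i a b) ` ({..<3} \<times> {..<3})"
    by clarify (metis (no_types, lifting) SigmaI case_prod_conv imageI inlabel_less lessThan_iff
        outlabel_less vertex_level_labels)
qed simp

text \<open>If \<open>e = (u, v)\<close> then \<open>e, (x, v), (x, y)\<close> is an alternating walk for suitable \<open>x, y\<close> with
  \<open>inlabel y = outlabel u\<close>; so \<open>u\<close> and \<open>y\<close> would lie on the two sides of a complete bipartite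
  \<open>\<Delta>(e)\<close>, although \<open>(u, y)\<close> is not an edge.\<close>

lemma not_complete_bipartite_Delta:
  assumes e: "e \<in> label_edges"
  shows "\<not> complete_bipartite (Delta_verts label_edges e) (Delta_edges label_edges e)"
proof
  assume "complete_bipartite (Delta_verts label_edges e) (Delta_edges label_edges e)"
  then obtain A B where AB: "Delta_edges label_edges e = A \<times> B"
    unfolding complete_bipartite_def by blast
  obtain u v where uv: "e = (u, v)" by fastforce
  have ev: "level v = level u + 1" "outlabel u \<noteq> inlabel v"
    using e uv by (simp_all add: mem_label_edges)
  obtain c where c: "c < 3" "c \<noteq> inlabel v" "c \<noteq> outlabel u"
    using exists_third_label by blast
  define x where "x = vertex (level u) 0 c"
  define y where "y = vertex (level v) (outlabel u) 0"
  have edges: "(x, v) \<in> label_edges" "(x, y) \<in> label_edges"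
    using c ev by (simp_all add: x_def y_def mem_label_edges)
  have "alternating_walk label_edges [e, (x, v), (x, y)]"
    unfolding alternating_walk_def using e edges uv
    by (auto simp: share_init_def share_term_def nth_Cons')
  then have "e \<in> Delta_edges label_edges e" "(x, y) \<in> Delta_edges label_edges e"
    unfolding Delta_edges_def reachable_def by force+
  then have "(u, y) \<in> Delta_edges label_edges e"
    using AB uv by blast
  then have "(u, y) \<in> label_edges"
    unfolding Delta_edges_def reachable_def alternating_walk_def by blast
  then show False by (simp add: y_def mem_label_edges)
qed

theorem mainTheorem3:
  shows "\<exists>(V :: nat set) (E :: (nat \<times> nat) set) (\<phi> :: nat \<Rightarrow> int).
     digraph V E \<and> dconnected V E \<and> highly_arc_transitive V E \<and> epi_Z V E \<phi> \<and>
     (\<forall>i. finite {v\<in>V. \<phi> v = i}) \<and>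
     (\<forall>e\<in>E. \<not> complete_bipartite (Delta_verts E e) (Delta_edges E e))"
proof (intro exI conjI)
  show "digraph UNIV label_edges" by (simp add: digraph_def)
qed (use dconnected_label_edges highly_arc_transitive_label_edges epi_Z_level finite_level_fibre
      not_complete_bipartite_Delta in blast)+

end
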